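(* Let $n\ge1$ and $s\in D^n$. Then $\sum_{i=1}^{n}L_i\le\sum_{i=1}^{n}\left\lfloor\frac{i+1}{2}\right\rfloor$.
   Context: Let $D$ be a commutative integral domain with $1\neq 0$. For $s=(s_1,\dots,s_n)\in D^n$, a polynomial $f\in D[x]$ annihilates $s$ if $f=0$, or $d=\deg f\ge0$ and $\sum_{k=0}^{d}f_ks_{j-d+k}=0$ for all $d+1\le j\le n$. The linear complexity $L(s)$ is the least degree of a nonzero annihilator of $s$, and $L_i=L(s_1,\dots,s_i)$. *)

theory Defs
  imports "HOL-Computational_Algebra.Polynomial"
begin

text \<open>A sequence s = (s_1,...,s_n) in D^n is a list of length n; s_j is s ! (j-1).
  f annihilates s iff f = 0, or with d = degree f,
  sum_{k=0}^d f_k s_{j-d+k} = 0 for all d+1 <= j <= n.\<close>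

definition annihilates :: "'a::idom poly \<Rightarrow> 'a list \<Rightarrow> bool" where
  "annihilates f s \<longleftrightarrow> f = 0 \<or>
     (\<forall>j. degree f + 1 \<le> j \<and> j \<le> length s \<longrightarrow>
        (\<Sum>k\<le>degree f. coeff f k * s ! (j - degree f + k - 1)) = 0)"

definition lin_compl :: "'a::idom list \<Rightarrow> nat" where
  "lin_compl s = (LEAST d. \<exists>f. f \<noteq> 0 \<and> degree f = d \<and> annihilates f s)"

end

theory Submission
  imports Defs
begin

(*
  Proof idea (following Massey's analysis of the shift-register synthesis problem).
  Write L_i for the linear complexity of the prefix s_1..s_i.

  1. Massey's recursion bound: L_{i+1} <= max L_i (i + 1 - L_i).  Take the last index
     m at which the complexity jumped to L_i; a minimal annihilator g of s_1..s_m fails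
     at m+1, and a suitable combination of a minimal annihilator f of s_1..s_i with a
     shift of g annihilates s_1..s_{i+1} (the Berlekamp-Massey update).
  2. From 1, by induction on k: sum_{i<=k} L_i <= L_k * (k + 1 - L_k), a purely
     arithmetic consequence of the recursion bound and L_k <= L_{k+1} <= k+1.
  3. l * (n + 1 - l) is at most floor((n+1)/2) * floor((n+2)/2), which is the closed
     form of sum_{i<=n} floor((i+1)/2).

  Annihilation is expressed through "window sums" sum_u f_u s_{c+u}, which behave
  linearly in f and turn multiplication by x^a into a shift of the window.
*)

definition window :: "'a::idom list \<Rightarrow> 'a poly \<Rightarrow> nat \<Rightarrow> nat \<Rightarrow> 'a" where
  "window s p N c = (\<Sum>u\<le>N. coeff p u * s ! (c + u))"

lemma window_degree:
  assumes "degree p \<le> N"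
  shows "window s p N c = window s p (degree p) c"
  unfolding window_def using assms
  by (intro sum.mono_neutral_right) (auto simp: coeff_eq_0)

lemma window_shift: "window s (monom 1 a * p) (N + a) c = window s p N (c + a)"
proof (induction a arbitrary: c)
  case 0
  then show ?case by (simp add: window_def monom_0)
next
  case (Suc a)
  have "coeff (monom 1 (Suc a) * p) 0 = 0"
    by (simp add: coeff_monom_mult)
  then have "window s (monom 1 (Suc a) * p) (Suc (N + a)) c
      = window s (monom 1 a * p) (N + a) (Suc c)"
    unfolding window_def sum.atMost_Suc_shift by (simp add: coeff_monom_Suc)
  then have "window s (monom 1 (Suc a) * p) (N + Suc a) c
      = window s (monom 1 a * p) (N + a) (Suc c)"
    by simp
  also have "\<dots> = window s p N (c + Suc a)"
    using Suc.IH by simp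
  finally show ?case .
qed

lemma window_shift_degree:
  assumes "degree p + a \<le> N"
  shows "window s (monom 1 a * p) N c = window s p (degree p) (c + a)"
proof (cases "p = 0")
  case True
  then show ?thesis by (simp add: window_def)
next
  case False
  then have "degree (monom 1 a * p) = degree p + a"
    by (simp add: degree_mult_eq degree_monom_eq)
  then have "window s (monom 1 a * p) N c = window s (monom 1 a * p) (degree p + a) c"
    using window_degree[of "monom 1 a * p" N s c] assms by simp
  then show ?thesis using window_shift by simp
qed

lemma window_diff:
  "window s (smult x p - smult y q) N c = x * window s p N c - y * window s q N c"
  unfolding window_def by (simp add: algebra_simps sum_subtractf sum_distrib_left)

lemma annihilates_take_iff:
  assumes "i \<le> length s"
  shows "annihilates f (take i s) \<longleftrightarrow> (\<forall>c. degree f + c < i \<longrightarrow> window s f (degree f) c = 0)"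
proof -
  have window_eq: "(\<Sum>k\<le>degree f. coeff f k * take i s ! (j - degree f + k - 1))
        = window s f (degree f) (j - degree f - 1)" if "degree f + 1 \<le> j" "j \<le> i" for j
    unfolding window_def
  proof (rule sum.cong[OF refl])
    fix k assume "k \<in> {..degree f}"
    then have "j - degree f + k - 1 < i" "j - degree f + k - 1 = j - degree f - 1 + k"
      using that by auto
    then show "coeff f k * take i s ! (j - degree f + k - 1)
        = coeff f k * s ! (j - degree f - 1 + k)"
      by simp
  qed
  have "annihilates f (take i s) \<longleftrightarrow>
      (\<forall>j. degree f + 1 \<le> j \<and> j \<le> i \<longrightarrow> window s f (degree f) (j - degree f - 1) = 0)"
    unfolding annihilates_def using assms window_eq by (auto simp: window_def)
  also have "\<dots> \<longleftrightarrow> (\<forall>c. degree f + c < i \<longrightarrow> window s f (degree f) c = 0)"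
  proof safe
    fix c assume "\<forall>j. degree f + 1 \<le> j \<and> j \<le> i \<longrightarrow> window s f (degree f) (j - degree f - 1) = 0"
      and "degree f + c < i"
    then show "window s f (degree f) c = 0"
      by (drule_tac spec[of _ "degree f + c + 1"]) simp
  next
    fix j assume "\<forall>c. degree f + c < i \<longrightarrow> window s f (degree f) c = 0"
      and "degree f + 1 \<le> j" "j \<le> i"
    then show "window s f (degree f) (j - degree f - 1) = 0"
      by (drule_tac spec[of _ "j - degree f - 1"]) simp
  qed
  finally show ?thesis .
qed

lemma annihilates_take_Suc_iff:
  assumes "Suc i \<le> length s"
  shows "annihilates f (take (Suc i) s) \<longleftrightarrow> annihilates f (take i s) \<and>
    (degree f \<le> i \<longrightarrow> window s f (degree f) (i - degree f) = 0)"
proof -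
  have split_last: "(\<forall>c. d + c < Suc i \<longrightarrow> P c)
      \<longleftrightarrow> (\<forall>c. d + c < i \<longrightarrow> P c) \<and> (d \<le> i \<longrightarrow> P (i - d))" for d and P :: "nat \<Rightarrow> bool"
    by (auto simp: less_Suc_eq le_iff_add)
  show ?thesis
    unfolding annihilates_take_iff[OF assms] split_last
    using assms annihilates_take_iff[of i s f] by simp
qed

text \<open>x^n annihilates every sequence of length n, since no window fits.\<close>

lemma annihilates_monom_length: "annihilates (monom 1 (length s)) s"
  unfolding annihilates_def by (auto simp: degree_monom_eq)

lemma lin_compl_witness: "\<exists>f. f \<noteq> 0 \<and> degree f = lin_compl s \<and> annihilates f s"
proof -
  have "\<exists>d f. f \<noteq> 0 \<and> degree f = d \<and> annihilates f s"
    using annihilates_monom_length[of s]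
    by (intro exI[of _ "length s"] exI[of _ "monom 1 (length s)"]) (simp add: degree_monom_eq)
  then show ?thesis unfolding lin_compl_def by (rule LeastI_ex)
qed

lemma lin_compl_le_degree: "f \<noteq> 0 \<Longrightarrow> annihilates f s \<Longrightarrow> lin_compl s \<le> degree f"
  unfolding lin_compl_def by (rule Least_le) blast

lemma lin_compl_le_length: "lin_compl s \<le> length s"
  using lin_compl_le_degree[OF _ annihilates_monom_length, of s] by (simp add: degree_monom_eq)

text \<open>Every annihilator of a sequence annihilates its prefixes, so L_i is monotone.\<close>

lemma lin_compl_take_mono:
  assumes "k \<le> i"
  shows "lin_compl (take k s) \<le> lin_compl (take i s)"
proof -
  obtain f where f: "f \<noteq> 0" "degree f = lin_compl (take i s)" "annihilates f (take i s)"
    using lin_compl_witness by blast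
  have "annihilates f (take k s)"
    using f(3) assms unfolding annihilates_def by (auto simp: min_def)
  then show ?thesis using lin_compl_le_degree f by fastforce
qed

section \<open>Massey's recursion bound\<close>

lemma annihilator_update:
  fixes f g :: "'a::idom poly"
  assumes len: "Suc i \<le> length s" and "m < i"
    and f: "f \<noteq> 0" "annihilates f (take i s)"
    and g: "g \<noteq> 0" "annihilates g (take m s)" "degree g \<le> m"
    and disc_g: "window s g (degree g) (m - degree g) \<noteq> 0"
  shows "\<exists>h. h \<noteq> 0 \<and> degree h = max (degree f) (degree g + (i - m))
    \<and> annihilates h (take (Suc i) s)"
proof -
  define l e r where "l = degree f" and "e = degree g" and "r = i - m"
  define \<delta> \<delta>' where "\<delta> = window s f l (i - l)" and "\<delta>' = window s g e (m - e)"
  define D where "D = max l (e + r)"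
  define h where "h = smult \<delta>' (monom 1 (D - l) * f) - smult \<delta> (monom 1 (D - r - e) * g)"
  have "r \<ge> 1" "\<delta>' \<noteq> 0" using \<open>m < i\<close> disc_g by (auto simp: r_def \<delta>'_def e_def)
  have fz: "window s f l c = 0" if "l + c < i" for c
    using f(2) that len annihilates_take_iff[of i s f] by (simp add: l_def)
  have gz: "window s g e c = 0" if "e + c < m" for c
    using g(2) that len \<open>m < i\<close> annihilates_take_iff[of m s g] by (simp add: e_def)
  have "degree (smult \<delta>' (monom 1 (D - l) * f)) = D"
    using \<open>\<delta>' \<noteq> 0\<close> f(1) by (simp add: degree_mult_eq degree_monom_eq l_def D_def)
  moreover have "degree (smult \<delta> (monom 1 (D - r - e) * g)) < D"
    using g(1) \<open>r \<ge> 1\<close> by (auto simp: degree_mult_eq degree_monom_eq e_def D_def)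
  ultimately have deg_h: "degree h = D"
    unfolding h_def by (metis degree_add_eq_left degree_minus diff_conv_add_uminus)
  have "h \<noteq> 0" using deg_h \<open>r \<ge> 1\<close> D_def by auto
  have window_h: "window s h D c
      = \<delta>' * window s f l (c + (D - l)) - \<delta> * window s g e (c + (D - r - e))" for c
    unfolding h_def window_diff using window_shift_degree[of f "D - l" D s c]
      window_shift_degree[of g "D - r - e" D s c] by (simp add: D_def l_def e_def)
  have "window s h D c = 0" if "D + c < Suc i" for c
  proof (cases "D + c = i")
    case True
    then have "c + (D - l) = i - l" "c + (D - r - e) = m - e"
      using \<open>m < i\<close> g(3) by (auto simp: D_def r_def e_def)
    then show ?thesis unfolding window_h \<delta>_def \<delta>'_def by simp
  next
    case False
    then show ?thesis unfolding window_h using that fz gz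
      by (simp add: D_def r_def)
  qed
  then have "annihilates h (take (Suc i) s)"
    using annihilates_take_iff[OF len, of h] deg_h by simp
  then show ?thesis using \<open>h \<noteq> 0\<close> deg_h by (auto simp: D_def l_def e_def r_def)
qed

lemma lin_compl_last_jump:
  assumes "lin_compl (take i s) > 0"
  obtains m where "m < i" "lin_compl (take m s) < lin_compl (take (Suc m) s)"
    "lin_compl (take (Suc m) s) = lin_compl (take i s)"
proof -
  define L where "L k = lin_compl (take k s)" for k
  define m where "m = (LEAST m. L m = L i)"
  have "L m = L i" "m \<le> i" unfolding m_def by (auto intro: LeastI Least_le)
  have "L 0 = 0" using lin_compl_le_length[of "take 0 s"] by (simp add: L_def)
  then obtain m' where m': "m = Suc m'"
    using \<open>L m = L i\<close> assms by (cases m) (auto simp: L_def)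
  have "L m' \<noteq> L i" using not_less_Least[of m' "\<lambda>m. L m = L i"] m' by (simp add: m_def)
  moreover have "L m' \<le> L i" using lin_compl_take_mono[of m' i s] m' \<open>m \<le> i\<close>
    by (simp add: L_def)
  ultimately show ?thesis using that[of m'] m' \<open>L m = L i\<close> \<open>m \<le> i\<close> by (simp add: L_def)
qed

text \<open>At the
  last jump m of the complexity, the induction hypothesis bounds L_i, and the minimal
  annihilator g that failed there is combined with a minimal annihilator f of the
  length-i prefix by the update step.\<close>

lemma lin_compl_step:
  fixes s :: "'a::idom list"
  shows "i < length s \<Longrightarrow> lin_compl (take (Suc i) s)
     \<le> max (lin_compl (take i s)) (Suc i - lin_compl (take i s))"
proof (induction i rule: less_induct)
  case (less i)
  define L where "L k = lin_compl (take k s)" for k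
  have len: "Suc i \<le> length s" using less.prems by simp
  obtain f where f: "f \<noteq> 0" "degree f = L i" "annihilates f (take i s)"
    using lin_compl_witness unfolding L_def by blast
  show ?case
  proof (cases "L i = 0")
    case True
    then show ?thesis using lin_compl_le_length[of "take (Suc i) s"] len by (simp add: L_def)
  next
    case False
    obtain m where m: "m < i" "L m < L (Suc m)" "L (Suc m) = L i"
      using lin_compl_last_jump[of i s] False unfolding L_def by blast
    have bound: "L i \<le> Suc m - L m"
      using less.IH[of m] m less.prems by (simp add: L_def)
    obtain g where g: "g \<noteq> 0" "degree g = L m" "annihilates g (take m s)"
      using lin_compl_witness unfolding L_def by blast
    have "\<not> annihilates g (take (Suc m) s)"
      using lin_compl_le_degree[OF g(1)] g(2) m(2) by (force simp: L_def)
    then have g_disc: "degree g \<le> m" "window s g (degree g) (m - degree g) \<noteq> 0"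
      using annihilates_take_Suc_iff[of m s g] g(3) m(1) len by auto
    obtain h where h: "h \<noteq> 0" "degree h = max (L i) (L m + (i - m))"
        "annihilates h (take (Suc i) s)"
      using annihilator_update[OF len m(1) f(1) f(3) g(1) g(3) g_disc] f(2) g(2)
      by auto
    have "L (Suc i) \<le> max (L i) (L m + (i - m))"
      using lin_compl_le_degree[OF h(1) h(3)] h(2) by (simp add: L_def)
    also have "\<dots> \<le> max (L i) (Suc i - L i)"
      using bound g_disc(1) g(2) m(1) by auto
    finally show ?thesis by (simp add: L_def)
  qed
qed

lemma area_step:
  fixes l l' k :: nat
  assumes "l \<le> k" "l \<le> l'" "l' \<le> max l (Suc k - l)" "l' \<le> Suc k"
  shows "l * (k + 1 - l) + l' \<le> l' * (Suc k + 1 - l')"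
proof (cases "l' = l")
  case True
  then show ?thesis using assms(1) by (simp add: algebra_simps Suc_diff_le)
next
  case False
  then have "l < l'" "l' \<le> Suc k - l" using assms by auto
  then obtain d t where d: "l' = l + d" and t: "Suc k = l + l' + t"
    by (metis le_add_diff_inverse less_imp_le_nat add.commute le_diff_conv2 assms(1) le_SucI)
  then show ?thesis by (simp add: algebra_simps)
qed

lemma sum_lin_compl_le_area:
  fixes s :: "'a::idom list"
  shows "k \<le> length s \<Longrightarrow> (\<Sum>i=1..k. lin_compl (take i s))
     \<le> lin_compl (take k s) * (k + 1 - lin_compl (take k s))"
proof (induction k)
  case 0
  then show ?case by simp
next
  case (Suc k)
  have "(\<Sum>i=1..Suc k. lin_compl (take i s))
      = (\<Sum>i=1..k. lin_compl (take i s)) + lin_compl (take (Suc k) s)"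
    by simp
  also have "\<dots> \<le> lin_compl (take k s) * (k + 1 - lin_compl (take k s)) + lin_compl (take (Suc k) s)"
    using Suc by simp
  also have "\<dots> \<le> lin_compl (take (Suc k) s) * (Suc k + 1 - lin_compl (take (Suc k) s))"
    using Suc.prems lin_compl_le_length[of "take k s"] lin_compl_le_length[of "take (Suc k) s"]
      lin_compl_take_mono[of k "Suc k" s] lin_compl_step[of k s]
    by (intro area_step) auto
  finally show ?case .
qed

text \<open>Closed form of the right-hand side, obtained by pairing consecutive terms.\<close>

lemma sum_half_ceil: "(\<Sum>i=1..(n::nat). (i + 1) div 2) = ((n + 1) div 2) * ((n + 2) div 2)"
proof (induction n)
  case 0
  then show ?case by simp
next
  case (Suc n)
  consider q where "n = 2 * q" | q where "n = 2 * q + 1"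
    by (metis evenE oddE)
  then show ?case using Suc by cases (simp_all add: algebra_simps)
qed

text \<open>Among integers with fixed sum, the product is maximal for the two halves: for
  a \<le> b \<le> a + 1 no integer l lies strictly between a and b, so (l - a)(l - b) \<ge> 0.\<close>

lemma product_le_balanced_split:
  fixes l N :: nat
  assumes "l \<le> N"
  shows "l * (N - l) \<le> (N div 2) * ((N + 1) div 2)"
proof -
  define a b where "a = int (N div 2)" and "b = int ((N + 1) div 2)"
  have "a \<le> b" "b \<le> a + 1" "a + b = int N"
    unfolding a_def b_def by linarith+
  then have "0 \<le> (int l - a) * (int l - b)"
    by (smt (verit) mult_nonneg_nonneg mult_nonpos_nonpos)
  then have "int l * (int N - int l) \<le> a * b"
    by (simp add: algebra_simps flip: \<open>a + b = int N\<close>)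
  moreover have "int (l * (N - l)) = int l * (int N - int l)"
    using assms by (simp add: of_nat_diff)
  ultimately show ?thesis
    unfolding a_def b_def by (metis of_nat_le_iff of_nat_mult)
qed

theorem mainTheorem11:
  fixes s :: "'a::idom list" and n :: nat
  assumes "n \<ge> 1" and "length s = n"
  shows "(\<Sum>i=1..n. lin_compl (take i s)) \<le> (\<Sum>i=1..n. (i + 1) div 2)"
proof -
  define L where "L = lin_compl (take n s)"
  have "(\<Sum>i=1..n. lin_compl (take i s)) \<le> L * (n + 1 - L)"
    using sum_lin_compl_le_area[of n s] assms by (simp add: L_def)
  also have "\<dots> \<le> ((n + 1) div 2) * ((n + 1 + 1) div 2)"
    using lin_compl_le_length[of "take n s"] assms
    by (intro product_le_balanced_split) (simp add: L_def)
  also have "\<dots> = (\<Sum>i=1..n. (i + 1) div 2)"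
    using sum_half_ceil[of n] by simp
  finally show ?thesis .
qed

end
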